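(* Let $K_1,K_2\ge1$ be integers, $n\ge0$, let $P_n(x,y),Q_n(x,y)$ be real polynomials of degree $n$, and let $\mathrm{a}_1,\ldots,\mathrm{a}_{K_1},\mathrm{b}_1,\ldots,\mathrm{b}_{K_2}$ be nonzero real numbers with $\mathrm{a}_j\ne\mathrm{a}_\ell$ and $\mathrm{b}_j\neq\mathrm{b}_\ell$ for $j\ne\ell$. For $0<r<\rho:=\min_{j,k}\{|\mathrm{a}_j|,|\mathrm{b}_k|\}$ let $\gamma_r=\{(x,y):x^2+y^2=r^2\}$ and \[ I(r)=\int_{\gamma_r}\frac{Q_n(x,y)\,dx-P_n(x,y)\,dy}{\prod_{j=1}^{K_1}(x-\mathrm{a}_j)\prod_{k=1}^{K_2}(y-\mathrm{b}_k)}. \] Then there exist real polynomials $U^{j,k}(\rho),V^{j,k}(\rho)$ ($j=1,\ldots,K_1$, $k=1,\ldots,K_2$) of degree at most $[n/2]+1$ and a real polynomial $W(\rho)$ of degree at most $[(n-1)/2]$ such that for all $0<r<\rho$, \[ I(r)=\sum_{j=1}^{K_1}\left(\sum_{k=1}^{K_2}\frac{U^{j,k}(r^2)}{\mathrm{a}_j^2+\mathrm{b}_k^2-r^2}\right)\frac{1}{\sqrt{\mathrm{a}_j^2-r^2}}+\sum_{k=1}^{K_2}\left(\sum_{j=1}^{K_1}\frac{V^{j,k}(r^2)}{\mathrm{a}_j^2+\mathrm{b}_k^2-r^2}\right)\frac{1}{\sqrt{\mathrm{b}_k^2-r^2}}+W(r^2). \]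
   Context: $[s]$ denotes the integer part of $s$ (so $[(n-1)/2]=-1$ when $n=0$, meaning $W=0$). The circle $\gamma_r$ is parametrized by $(r\cos\theta,r\sin\theta)$, $\theta\in[0,2\pi]$. *)

theory Defs
  imports "HOL-Analysis.Analysis" "HOL-Computational_Algebra.Polynomial"
begin

text \<open>A real polynomial in two variables of total degree at most n is represented by
its coefficient function c, where c i j is the coefficient of x^i y^j; only the
coefficients with i + j \<le> n are used.\<close>
definition bipoly_eval :: "nat \<Rightarrow> (nat \<Rightarrow> nat \<Rightarrow> real) \<Rightarrow> real \<Rightarrow> real \<Rightarrow> real" where
  "bipoly_eval n c x y = (\<Sum>i\<le>n. \<Sum>j\<le>n - i. c i j * x ^ i * y ^ j)"

text \<open>The line integral over the circle of radius r, parametrized by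
(r cos t, r sin t), t in [0, 2 pi], of (Q dx - P dy) / (prod (x - a_j) prod (y - b_k)).\<close>
definition circle_integral_I ::
  "nat \<Rightarrow> (nat \<Rightarrow> nat \<Rightarrow> real) \<Rightarrow> (nat \<Rightarrow> nat \<Rightarrow> real) \<Rightarrow> nat \<Rightarrow> nat
     \<Rightarrow> (nat \<Rightarrow> real) \<Rightarrow> (nat \<Rightarrow> real) \<Rightarrow> real \<Rightarrow> real" where
  "circle_integral_I n P Q K1 K2 a b r =
     integral {0..2*pi} (\<lambda>t.
       (bipoly_eval n Q (r * cos t) (r * sin t) * (- r * sin t)
        - bipoly_eval n P (r * cos t) (r * sin t) * (r * cos t))
       / ((\<Prod>j=1..K1. r * cos t - a j) * (\<Prod>k=1..K2. r * sin t - b k)))"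

end

theory Submission
  imports Defs
begin

(* Partial fractions in x and in y turn the integrand into a combination of
   x^p y^q / ((x - a_j) (y - b_k)) with p + q <= n + 1.  Dividing x^p by x - a_j and y^q by
   y - b_k leaves monomials x^m y^h with m + h < n, quotients y^h / (x - a_j) and
   x^m / (y - b_k) with h, m <= n, and 1 / ((x - a_j) (y - b_k)).  On the circle of radius r:
   the integral of x^m y^h is r^(m+h) times a constant, and 0 if m + h is odd;
   the relation y^2 = (r^2 - c^2) - (x - c) (x + c) reduces the integral of y^(2e) / (x - c)
   to (r^2 - c^2)^e times that of 1 / (x - c), which is -2 pi sgn c / sqrt (c^2 - r^2),
   up to a polynomial in r^2 of degree < e;
   and 1 / ((x - c) (y - d)) = - ((x + c) / (y - d) + (y + d) / (x - c)) / (c^2 + d^2 - r^2).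
   Quotients by y - d become quotients by x - d under t -> pi/2 - t, which swaps cos and sin.
   Multiplying the square-root terms by (a_j^2 + b_k^2 - r^2) / (a_j^2 + b_k^2 - r^2) gives the
   stated form, with the stated degree bounds. *)

section \<open>Integrals of periodic functions\<close>

lemma integral_reflect_periodic:
  fixes f :: "real \<Rightarrow> real"
  assumes cont: "continuous_on UNIV f" and periodic: "\<And>x. f (x + p) = f x"
    and "0 \<le> c" "c \<le> p"
  shows "integral {0..p} (\<lambda>t. f (c - t)) = integral {0..p} f"
proof -
  have int: "f integrable_on {u..v}" for u v
    by (rule integrable_continuous_real) (use cont continuous_on_subset in blast)
  have "integral {0..p} (\<lambda>t. f (c - t)) = integral {-p..0} (\<lambda>t. f (t + c))"
    using Henstock_Kurzweil_Integration.integral_reflect_real[of 0 "-p" "\<lambda>t. f (t + c)"] by simp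
  also have "\<dots> = integral {c - p..c} f"
    using integral_shift_real_ivl[of "c - p" c c f] by simp
  also have "\<dots> = integral {c - p..0} f + integral {0..c} f"
    using assms(3,4) int by (intro Henstock_Kurzweil_Integration.integral_combine[symmetric]) auto
  also have "integral {c - p..0} f = integral {c..p} f"
  proof -
    have "(\<lambda>x. f (x + - p)) = f" using periodic[of "_ - p"] by simp
    then show ?thesis using integral_shift_real_ivl[of "c - p" "-p" 0 f] by simp
  qed
  also have "integral {c..p} f + integral {0..c} f = integral {0..p} f"
    using assms(3,4) int by (subst add.commute, intro Henstock_Kurzweil_Integration.integral_combine) auto
  finally show ?thesis .
qed

lemma integral_periodic_antisymmetric_eq_0:
  fixes f :: "real \<Rightarrow> real"
  assumes "continuous_on UNIV f" "\<And>x. f (x + p) = f x" "0 \<le> c" "c \<le> p"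
    and antisym: "\<And>t. f (c - t) = - f t"
  shows "integral {0..p} f = 0"
proof -
  have "integral {0..p} f = - integral {0..p} f"
    using integral_reflect_periodic[OF assms(1-4)] by (simp add: antisym)
  then show ?thesis by simp
qed

lemma integral_swap_cos_sin:
  fixes g :: "real \<Rightarrow> real \<Rightarrow> real"
  assumes "continuous_on UNIV (\<lambda>t. g (cos t) (sin t))"
  shows "integral {0..2*pi} (\<lambda>t. g (sin t) (cos t)) = integral {0..2*pi} (\<lambda>t. g (cos t) (sin t))"
proof -
  have "integral {0..2*pi} (\<lambda>t. g (cos (pi/2 - t)) (sin (pi/2 - t))) = integral {0..2*pi} (\<lambda>t. g (cos t) (sin t))"
    by (rule integral_reflect_periodic[OF assms]) auto
  moreover have "cos (pi/2 - t) = sin t" "sin (pi/2 - t) = cos t" for t :: real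
    by (simp_all add: cos_diff sin_diff)
  ultimately show ?thesis by simp
qed

section \<open>Integrals over the circle of radius r\<close>

lemma has_integral_inverse_sub_cos:
  fixes c r :: real
  assumes "\<bar>r\<bar> < c"
  shows "((\<lambda>t. 1 / (c - r * cos t)) has_integral 2 * pi / sqrt (c\<^sup>2 - r\<^sup>2)) {0..2*pi}"
proof -
  define s where "s = sqrt (c\<^sup>2 - r\<^sup>2)"
  have "\<bar>r\<bar>\<^sup>2 < c\<^sup>2" using assms by (intro power_strict_mono) auto
  then have s2: "s\<^sup>2 = c\<^sup>2 - r\<^sup>2" and s_pos: "s > 0" unfolding s_def by simp_all
  define A where "A = c + s"
  have A_pos: "A > 0" using assms s_pos unfolding A_def by linarith
  \<comment> \<open>Unlike the antiderivative from the substitution tan (t/2), this one is smooth on all of \<real>.\<close>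
  define F where "F t = t + 2 * arctan (r * sin t / (A - r * cos t))" for t
  have "(F has_real_derivative s / (c - r * cos t)) (at t)" for t
  proof -
    define D where "D = A - r * cos t"
    have "\<bar>r * cos t\<bar> \<le> \<bar>r\<bar>" using abs_cos_le_one[of t] by (simp add: abs_mult mult_left_le)
    then have D_pos: "D > 0" and E_pos: "c - r * cos t > 0"
      using assms s_pos unfolding D_def A_def by linarith+
    have denom: "D\<^sup>2 + (r * sin t)\<^sup>2 = 2 * A * (c - r * cos t)"
      unfolding D_def A_def using s2 sin_cos_squared_add[of t] by algebra
    have numer: "r * cos t * D - (r * sin t)\<^sup>2 = A * (r * cos t - c + s)"
      unfolding D_def A_def using s2 sin_cos_squared_add[of t] by algebra
    have inv: "inverse (1 + (y / D)\<^sup>2) * (N / D\<^sup>2) = N / (D\<^sup>2 + y\<^sup>2)" for y N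
      using D_pos by (simp add: field_simps)
    have "1 + 2 * (inverse (1 + (r * sin t / D)\<^sup>2) * ((r * cos t * D - (r * sin t)\<^sup>2) / D\<^sup>2))
        = s / (c - r * cos t)"
      unfolding inv denom numer using A_pos E_pos by (simp add: field_simps)
    moreover have "(F has_real_derivative
        1 + 2 * (inverse (1 + (r * sin t / D)\<^sup>2) * ((r * cos t * D - (r * sin t)\<^sup>2) / D\<^sup>2))) (at t)"
      using D_pos unfolding F_def D_def by (auto intro!: derivative_eq_intros simp: power2_eq_square algebra_simps)
    ultimately show ?thesis by simp
  qed
  then have "((\<lambda>t. s / (c - r * cos t)) has_integral F (2*pi) - F 0) {0..2*pi}"
    by (intro fundamental_theorem_of_calculus)
      (auto simp: has_real_derivative_iff_has_vector_derivative intro: has_vector_derivative_at_within)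
  then have "((\<lambda>t. s / (c - r * cos t)) has_integral 2 * pi) {0..2*pi}"
    by (simp add: F_def)
  from has_integral_mult_right[OF this, of "1 / s"] show ?thesis
    using s_pos by (simp add: s_def)
qed

lemma integral_inverse_cos_sub:
  fixes c r :: real
  assumes "\<bar>r\<bar> < \<bar>c\<bar>"
  shows "integral {0..2*pi} (\<lambda>t. 1 / (r * cos t - c)) = - 2 * pi * sgn c / sqrt (c\<^sup>2 - r\<^sup>2)"
proof (cases "c > 0")
  case True
  have "integral {0..2*pi} (\<lambda>t. 1 / (c - r * cos t)) = 2 * pi / sqrt (c\<^sup>2 - r\<^sup>2)"
    by (rule integral_unique[OF has_integral_inverse_sub_cos]) (use assms True in auto)
  moreover have "(\<lambda>t. 1 / (r * cos t - c)) = (\<lambda>t. - (1 / (c - r * cos t)))"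
    by (simp add: fun_eq_iff minus_divide_right)
  ultimately show ?thesis
    using True by (simp only: integral_neg) simp
next
  case False
  with assms have "- c > \<bar>- r\<bar>" by simp
  from integral_unique[OF has_integral_inverse_sub_cos[OF this]]
  have "integral {0..2*pi} (\<lambda>t. 1 / (- c - (- r) * cos t)) = 2 * pi / sqrt (c\<^sup>2 - r\<^sup>2)"
    by simp
  moreover have "(\<lambda>t. 1 / (- c - (- r) * cos t)) = (\<lambda>t. 1 / (r * cos t - c))"
    by (simp add: fun_eq_iff)
  ultimately show ?thesis
    using False assms by simp
qed

lemma circle_coordinates_neq:
  fixes r c t :: real
  assumes "\<bar>r\<bar> < \<bar>c\<bar>"
  shows "r * cos t \<noteq> c" "r * sin t \<noteq> c"
proof -
  have "\<bar>r * cos t\<bar> \<le> \<bar>r\<bar>" "\<bar>r * sin t\<bar> \<le> \<bar>r\<bar>"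
    using abs_cos_le_one[of t] abs_sin_le_one[of t] by (simp_all add: abs_mult mult_left_le)
  then show "r * cos t \<noteq> c" "r * sin t \<noteq> c" using assms by auto
qed

lemma circle_coordinates_sq:
  fixes r t :: real
  shows "(r * cos t)\<^sup>2 + (r * sin t)\<^sup>2 = r\<^sup>2"
proof -
  have "r\<^sup>2 * ((cos t)\<^sup>2 + (sin t)\<^sup>2) = r\<^sup>2" by simp
  then show ?thesis by (simp only: power_mult_distrib distrib_left)
qed

lemma even_power_div_recurrence:
  fixes x y c R :: real
  assumes "x\<^sup>2 + y\<^sup>2 = R\<^sup>2" "x \<noteq> c"
  shows "y ^ (2 * Suc e) / (x - c) = (R\<^sup>2 - c\<^sup>2) * (y ^ (2 * e) / (x - c)) - (x + c) * y ^ (2 * e)"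
proof -
  have "y\<^sup>2 = (R\<^sup>2 - c\<^sup>2) - (x - c) * (x + c)"
    using assms(1) by (simp add: algebra_simps power2_eq_square)
  then have "y ^ (2 * Suc e) = ((R\<^sup>2 - c\<^sup>2) - (x - c) * (x + c)) * y ^ (2 * e)"
    by (simp add: power2_eq_square)
  then show ?thesis using assms(2) by (simp add: field_simps)
qed

lemma integral_circle_monomial_odd:
  assumes "odd (m + h)"
  shows "integral {0..2*pi} (\<lambda>t. (r * cos t) ^ m * (r * sin t) ^ h) = 0"
proof -
  have cont: "continuous_on UNIV (\<lambda>t. (r * cos t) ^ m * (r * sin t) ^ h)"
    by (intro continuous_intros)
  show ?thesis
  proof (cases "odd h")
    case True
    show ?thesis
      by (rule integral_periodic_antisymmetric_eq_0[OF cont, of "2*pi" 0]) (simp_all add: True)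
  next
    case False
    with assms have "odd m" by simp
    show ?thesis
      by (rule integral_periodic_antisymmetric_eq_0[OF cont, of "2*pi" pi]) (simp_all add: \<open>odd m\<close>)
  qed
qed

lemma integral_circle_monomial:
  "integral {0..2*pi} (\<lambda>t. (r * cos t) ^ m * (r * sin t) ^ h)
     = r ^ (m + h) * integral {0..2*pi} (\<lambda>t. cos t ^ m * sin t ^ h)"
proof -
  have "(\<lambda>t. (r * cos t) ^ m * (r * sin t) ^ h) = (\<lambda>t. r ^ (m + h) * (cos t ^ m * sin t ^ h))"
    by (simp add: power_mult_distrib power_add fun_eq_iff)
  then show ?thesis by simp
qed

lemma integral_odd_power_sin_over_cos:
  fixes r c :: real
  assumes "odd m" "\<bar>r\<bar> < \<bar>c\<bar>"
  shows "integral {0..2*pi} (\<lambda>t. (r * sin t) ^ m / (r * cos t - c)) = 0"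
proof -
  have cont: "continuous_on UNIV (\<lambda>t. (r * sin t) ^ m / (r * cos t - c))"
    by (intro continuous_intros) (simp add: circle_coordinates_neq[OF assms(2)])
  show ?thesis
    by (rule integral_periodic_antisymmetric_eq_0[OF cont, of "2*pi" 0]) (simp_all add: assms(1))
qed

lemma integral_power_cos_over_sin:
  fixes r d :: real
  assumes "\<bar>r\<bar> < \<bar>d\<bar>"
  shows "integral {0..2*pi} (\<lambda>t. (r * cos t) ^ m / (r * sin t - d))
       = integral {0..2*pi} (\<lambda>t. (r * sin t) ^ m / (r * cos t - d))"
proof -
  have "continuous_on UNIV (\<lambda>t. (r * sin t) ^ m / (r * cos t - d))"
    by (intro continuous_intros) (simp add: circle_coordinates_neq[OF assms])
  then show ?thesis
    by (rule integral_swap_cos_sin[where g = "\<lambda>x y. (r * y) ^ m / (r * x - d)"])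
qed

lemma integral_even_power_sin_over_cos:
  fixes c :: real
  shows "\<exists>p. (p = 0 \<or> degree p < e) \<and> (\<forall>r. \<bar>r\<bar> < \<bar>c\<bar> \<longrightarrow>
           integral {0..2*pi} (\<lambda>t. (r * sin t) ^ (2*e) / (r * cos t - c))
             = (r\<^sup>2 - c\<^sup>2) ^ e * integral {0..2*pi} (\<lambda>t. 1 / (r * cos t - c)) + poly p (r\<^sup>2))"
proof (induction e)
  case 0
  show ?case by (intro exI[of _ 0]) simp
next
  case (Suc e)
  then obtain p where p_deg: "p = 0 \<or> degree p < e"
    and p: "\<And>r. \<bar>r\<bar> < \<bar>c\<bar> \<Longrightarrow> integral {0..2*pi} (\<lambda>t. (r * sin t) ^ (2*e) / (r * cos t - c))
             = (r\<^sup>2 - c\<^sup>2) ^ e * integral {0..2*pi} (\<lambda>t. 1 / (r * cos t - c)) + poly p (r\<^sup>2)"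
    by blast
  define \<mu> where "\<mu> = integral {0..2*pi} (\<lambda>t. sin t ^ (2 * e))"
  define q where "q = [:- c\<^sup>2, 1:] * p - monom (c * \<mu>) e"
  have "degree ([:- c\<^sup>2, 1:] * p) \<le> e"
    using p_deg degree_mult_le[of "[:- c\<^sup>2, 1:]" p] by (auto simp: degree_pCons_le)
  then have "degree q < Suc e"
    unfolding q_def using degree_diff_le[OF _ degree_monom_le] by (meson le_imp_less_Suc)
  moreover have "integral {0..2*pi} (\<lambda>t. (r * sin t) ^ (2 * Suc e) / (r * cos t - c))
      = (r\<^sup>2 - c\<^sup>2) ^ Suc e * integral {0..2*pi} (\<lambda>t. 1 / (r * cos t - c)) + poly q (r\<^sup>2)"
    if r: "\<bar>r\<bar> < \<bar>c\<bar>" for r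
  proof -
    note neq = circle_coordinates_neq[OF r]
    have int: "(\<lambda>t. (r * sin t) ^ (2 * e) / (r * cos t - c)) integrable_on {0..2*pi}"
      "(\<lambda>t. r * cos t * (r * sin t) ^ (2 * e)) integrable_on {0..2*pi}"
      "(\<lambda>t. (r * sin t) ^ (2 * e)) integrable_on {0..2*pi}"
      by (intro integrable_continuous_real continuous_intros; simp add: neq)+
    have step: "(r * sin t) ^ (2 * Suc e) / (r * cos t - c)
        = (r\<^sup>2 - c\<^sup>2) * ((r * sin t) ^ (2 * e) / (r * cos t - c))
          - (r * cos t * (r * sin t) ^ (2 * e) + c * (r * sin t) ^ (2 * e))" for t
      using even_power_div_recurrence[OF circle_coordinates_sq neq(1)] by (simp add: distrib_right)
    have "integral {0..2*pi} (\<lambda>t. (r * sin t) ^ (2 * Suc e) / (r * cos t - c))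
        = (r\<^sup>2 - c\<^sup>2) * integral {0..2*pi} (\<lambda>t. (r * sin t) ^ (2 * e) / (r * cos t - c))
          - (integral {0..2*pi} (\<lambda>t. r * cos t * (r * sin t) ^ (2 * e))
             + c * integral {0..2*pi} (\<lambda>t. (r * sin t) ^ (2 * e)))"
      unfolding step by (intro integral_unique has_integral_diff has_integral_add has_integral_mult_right
          integrable_integral int)
    also have "integral {0..2*pi} (\<lambda>t. r * cos t * (r * sin t) ^ (2 * e)) = 0"
      using integral_circle_monomial_odd[of 1 "2 * e" r] by simp
    also have "integral {0..2*pi} (\<lambda>t. (r * sin t) ^ (2 * e)) = (r\<^sup>2) ^ e * \<mu>"
      using integral_circle_monomial[of r 0 "2 * e"] by (simp add: \<mu>_def power_mult)
    finally show ?thesis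
      unfolding p[OF r] q_def by (simp add: poly_monom algebra_simps)
  qed
  ultimately show ?case by blast
qed

lemma inverse_product_decomposition:
  fixes x y c d R :: real
  assumes "x\<^sup>2 + y\<^sup>2 = R\<^sup>2" "x \<noteq> c" "y \<noteq> d" "c\<^sup>2 + d\<^sup>2 - R\<^sup>2 \<noteq> 0"
  shows "1 / ((x - c) * (y - d))
    = - 1 / (c\<^sup>2 + d\<^sup>2 - R\<^sup>2) * ((x / (y - d) + c * (1 / (y - d))) + (y / (x - c) + d * (1 / (x - c))))"
proof -
  have "(x / (y - d) + c * (1 / (y - d))) + (y / (x - c) + d * (1 / (x - c)))
      = (x + c) / (y - d) + (y + d) / (x - c)"
    by (simp add: add_divide_distrib)
  also have "\<dots> = ((x + c) * (x - c) + (y + d) * (y - d)) / ((y - d) * (x - c))"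
    using assms(2,3) by (intro add_frac_eq) simp_all
  also have "(x + c) * (x - c) + (y + d) * (y - d) = - (c\<^sup>2 + d\<^sup>2 - R\<^sup>2)"
    using assms(1) by (simp add: algebra_simps power2_eq_square)
  finally have sum_eq: "(x / (y - d) + c * (1 / (y - d))) + (y / (x - c) + d * (1 / (x - c)))
      = - (c\<^sup>2 + d\<^sup>2 - R\<^sup>2) / ((x - c) * (y - d))"
    by (simp add: mult.commute)
  have "- 1 / D * (- D / Q) = 1 / Q" if "D \<noteq> 0" for D Q :: real
    using that by simp
  from this[OF assms(4)] show ?thesis
    unfolding sum_eq by simp
qed

lemma integral_inverse_product:
  fixes r c d :: real
  assumes c: "\<bar>r\<bar> < \<bar>c\<bar>" and d: "\<bar>r\<bar> < \<bar>d\<bar>"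
  shows "integral {0..2*pi} (\<lambda>t. 1 / ((r * cos t - c) * (r * sin t - d)))
    = - 1 / (c\<^sup>2 + d\<^sup>2 - r\<^sup>2) * (c * integral {0..2*pi} (\<lambda>t. 1 / (r * cos t - d))
                                  + d * integral {0..2*pi} (\<lambda>t. 1 / (r * cos t - c)))"
proof -
  note neq_c = circle_coordinates_neq[OF c] and neq_d = circle_coordinates_neq[OF d]
  have "c\<^sup>2 + d\<^sup>2 - r\<^sup>2 \<noteq> 0"
    using d abs_le_square_iff[of d r] zero_le_power2[of c] by linarith
  then have decomp: "1 / ((r * cos t - c) * (r * sin t - d)) = - 1 / (c\<^sup>2 + d\<^sup>2 - r\<^sup>2) *
      ((r * cos t / (r * sin t - d) + c * (1 / (r * sin t - d)))
       + (r * sin t / (r * cos t - c) + d * (1 / (r * cos t - c))))" for t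
    by (intro inverse_product_decomposition circle_coordinates_sq neq_c neq_d)
  have int: "(\<lambda>t. r * cos t / (r * sin t - d)) integrable_on {0..2*pi}"
    "(\<lambda>t. 1 / (r * sin t - d)) integrable_on {0..2*pi}"
    "(\<lambda>t. r * sin t / (r * cos t - c)) integrable_on {0..2*pi}"
    "(\<lambda>t. 1 / (r * cos t - c)) integrable_on {0..2*pi}"
    by (intro integrable_continuous_real continuous_intros; simp add: neq_c neq_d)+
  have "integral {0..2*pi} (\<lambda>t. r * cos t / (r * sin t - d)) = 0"
    using integral_power_cos_over_sin[OF d, of 1] integral_odd_power_sin_over_cos[OF _ d, of 1] by simp
  moreover have "integral {0..2*pi} (\<lambda>t. 1 / (r * sin t - d)) = integral {0..2*pi} (\<lambda>t. 1 / (r * cos t - d))"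
    using integral_power_cos_over_sin[OF d, of 0] by simp
  moreover have "integral {0..2*pi} (\<lambda>t. r * sin t / (r * cos t - c)) = 0"
    using integral_odd_power_sin_over_cos[OF _ c, of 1] by simp
  moreover have "integral {0..2*pi} (\<lambda>t. 1 / ((r * cos t - c) * (r * sin t - d)))
      = - 1 / (c\<^sup>2 + d\<^sup>2 - r\<^sup>2) *
        ((integral {0..2*pi} (\<lambda>t. r * cos t / (r * sin t - d)) + c * integral {0..2*pi} (\<lambda>t. 1 / (r * sin t - d)))
         + (integral {0..2*pi} (\<lambda>t. r * sin t / (r * cos t - c)) + d * integral {0..2*pi} (\<lambda>t. 1 / (r * cos t - c))))"
    unfolding decomp
    by (intro integral_unique has_integral_mult_right has_integral_add integrable_integral int)
  ultimately show ?thesis by simp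
qed

section \<open>Algebraic expansions of the integrand\<close>

lemma monomial_over_product_expansion:
  fixes x y c d :: real
  assumes "x \<noteq> c" "y \<noteq> d"
  shows "x ^ p * y ^ q / ((x - c) * (y - d))
    = (\<Sum>m<p. \<Sum>h<q. (c ^ (p - Suc m) * d ^ (q - Suc h)) * (x ^ m * y ^ h))
      + d ^ q * (\<Sum>m<p. c ^ (p - Suc m) * (x ^ m / (y - d)))
      + c ^ p * (\<Sum>h<q. d ^ (q - Suc h) * (y ^ h / (x - c)))
      + (c ^ p * d ^ q) * (1 / ((x - c) * (y - d)))"
proof -
  define Sx where "Sx = (\<Sum>m<p. c ^ (p - Suc m) * x ^ m)"
  define Sy where "Sy = (\<Sum>h<q. d ^ (q - Suc h) * y ^ h)"
  have x_pow: "x ^ p = (x - c) * Sx + c ^ p"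
    using power_diff_sumr2[of x p c] unfolding Sx_def by (simp add: algebra_simps)
  have y_pow: "y ^ q = (y - d) * Sy + d ^ q"
    using power_diff_sumr2[of y q d] unfolding Sy_def by (simp add: algebra_simps)
  have "x ^ p * y ^ q / ((x - c) * (y - d))
      = Sx * Sy + d ^ q * (Sx / (y - d)) + c ^ p * (Sy / (x - c)) + (c ^ p * d ^ q) * (1 / ((x - c) * (y - d)))"
  proof -
    have "(U * A + C) * (V * B + D) / (U * V) = A * B + D * (A / V) + C * (B / U) + (C * D) * (1 / (U * V))"
      if "U \<noteq> 0" "V \<noteq> 0" for U V A B C D :: real
      using that by (simp add: field_simps)
    then show ?thesis unfolding x_pow y_pow using assms by simp
  qed
  also have "Sx * Sy = (\<Sum>m<p. \<Sum>h<q. (c ^ (p - Suc m) * d ^ (q - Suc h)) * (x ^ m * y ^ h))"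
    unfolding Sx_def Sy_def sum_product by (simp add: algebra_simps)
  also have "Sx / (y - d) = (\<Sum>m<p. c ^ (p - Suc m) * (x ^ m / (y - d)))"
    unfolding Sx_def sum_divide_distrib by simp
  also have "Sy / (x - c) = (\<Sum>h<q. d ^ (q - Suc h) * (y ^ h / (x - c)))"
    unfolding Sy_def sum_divide_distrib by simp
  finally show ?thesis .
qed

lemma inverse_two_poles:
  fixes x p q :: "'a::field"
  assumes "x \<noteq> p" "x \<noteq> q" "p \<noteq> q"
  shows "1 / ((x - p) * (x - q)) = (1 / (x - p) - 1 / (x - q)) / (p - q)"
proof -
  have "1 / (U * V) = (1 / U - 1 / V) / (V - U)" if "U \<noteq> 0" "V \<noteq> 0" "V - U \<noteq> 0" for U V :: 'a
    using that by (simp add: field_simps)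
  then show ?thesis using assms by simp
qed

lemma inverse_prod_partial_fractions:
  fixes a :: "'i \<Rightarrow> 'a::field"
  assumes "finite J" "J \<noteq> {}" "inj_on a J"
  shows "\<exists>\<alpha>. \<forall>x. (\<forall>j\<in>J. x \<noteq> a j) \<longrightarrow> 1 / (\<Prod>j\<in>J. x - a j) = (\<Sum>j\<in>J. \<alpha> j / (x - a j))"
  using assms
proof (induction J rule: finite_ne_induct)
  case (singleton i)
  show ?case by (intro exI[of _ "\<lambda>_. 1"]) simp
next
  case (insert i J)
  from insert.prems obtain \<alpha>
    where \<alpha>: "\<And>x. \<forall>j\<in>J. x \<noteq> a j \<Longrightarrow> 1 / (\<Prod>j\<in>J. x - a j) = (\<Sum>j\<in>J. \<alpha> j / (x - a j))"
    using insert.IH by (auto simp: inj_on_insert)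
  have a_i: "a i \<noteq> a j" if "j \<in> J" for j
    using insert.prems insert.hyps that by (auto simp: inj_on_def)
  define \<beta> where "\<beta> = (\<lambda>j. - \<alpha> j / (a i - a j))(i := (\<Sum>j\<in>J. \<alpha> j / (a i - a j)))"
  have "1 / (\<Prod>j\<in>insert i J. x - a j) = (\<Sum>j\<in>insert i J. \<beta> j / (x - a j))"
    if x: "\<forall>j\<in>insert i J. x \<noteq> a j" for x
  proof -
    have "1 / (\<Prod>j\<in>insert i J. x - a j) = (1 / (x - a i)) * (1 / (\<Prod>j\<in>J. x - a j))"
      using insert.hyps by simp
    also have "\<dots> = (1 / (x - a i)) * (\<Sum>j\<in>J. \<alpha> j / (x - a j))"
      using x \<alpha> by simp
    also have "\<dots> = (\<Sum>j\<in>J. \<alpha> j * (1 / ((x - a i) * (x - a j))))"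
      by (simp add: sum_distrib_left)
    also have "\<dots> = (\<Sum>j\<in>J. \<alpha> j / (a i - a j) / (x - a i) + \<beta> j / (x - a j))"
    proof (rule sum.cong[OF refl])
      fix j assume "j \<in> J"
      with insert.hyps have "\<beta> j = - \<alpha> j / (a i - a j)" by (auto simp: \<beta>_def)
      with inverse_two_poles[of x "a i" "a j"] x a_i[OF \<open>j \<in> J\<close>] \<open>j \<in> J\<close> show "\<alpha> j * (1 / ((x - a i) * (x - a j))) = \<alpha> j / (a i - a j) / (x - a i) + \<beta> j / (x - a j)"
        by (simp add: diff_divide_distrib right_diff_distrib mult.commute)
    qed
    also have "\<dots> = (\<Sum>j\<in>J. \<alpha> j / (a i - a j)) / (x - a i) + (\<Sum>j\<in>J. \<beta> j / (x - a j))"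
      by (simp add: sum.distrib sum_divide_distrib)
    also have "\<dots> = (\<Sum>j\<in>insert i J. \<beta> j / (x - a j))"
      using insert.hyps by (simp add: \<beta>_def)
    finally show ?thesis .
  qed
  then show ?case by blast
qed

lemma circle_integrand_expansion:
  fixes X Y :: real and a b \<alpha> \<beta> :: "nat \<Rightarrow> real" and P Q :: "nat \<Rightarrow> nat \<Rightarrow> real"
  assumes \<alpha>: "1 / (\<Prod>j=1..K1. X - a j) = (\<Sum>j=1..K1. \<alpha> j / (X - a j))"
    and \<beta>: "1 / (\<Prod>k=1..K2. Y - b k) = (\<Sum>k=1..K2. \<beta> k / (Y - b k))"
  shows "(bipoly_eval n Q X Y * (- Y) - bipoly_eval n P X Y * X) / ((\<Prod>j=1..K1. X - a j) * (\<Prod>k=1..K2. Y - b k))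
    = (\<Sum>j=1..K1. \<Sum>k=1..K2. (\<alpha> j * \<beta> k) * (\<Sum>i\<le>n. \<Sum>l\<le>n - i.
         (- Q i l) * (X ^ i * Y ^ (l + 1) / ((X - a j) * (Y - b k)))
       + (- P i l) * (X ^ (i + 1) * Y ^ l / ((X - a j) * (Y - b k)))))"
proof -
  define N where "N = (\<Sum>i\<le>n. \<Sum>l\<le>n - i. (- Q i l) * (X ^ i * Y ^ (l + 1)) + (- P i l) * (X ^ (i + 1) * Y ^ l))"
  have "bipoly_eval n Q X Y * (- Y) - bipoly_eval n P X Y * X
      = (\<Sum>i\<le>n. \<Sum>l\<le>n - i. Q i l * X ^ i * Y ^ l * (- Y) - P i l * X ^ i * Y ^ l * X)"
    unfolding bipoly_eval_def by (simp add: sum_distrib_right sum_subtractf sum_negf)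
  also have "\<dots> = N"
    unfolding N_def by (intro sum.cong refl) (simp add: algebra_simps)
  finally have numerator: "bipoly_eval n Q X Y * (- Y) - bipoly_eval n P X Y * X = N" .
  have denominator: "1 / ((\<Prod>j=1..K1. X - a j) * (\<Prod>k=1..K2. Y - b k))
      = (\<Sum>j=1..K1. \<Sum>k=1..K2. (\<alpha> j * \<beta> k) * (1 / ((X - a j) * (Y - b k))))"
  proof -
    have "1 / ((\<Prod>j=1..K1. X - a j) * (\<Prod>k=1..K2. Y - b k)) = (1 / (\<Prod>j=1..K1. X - a j)) * (1 / (\<Prod>k=1..K2. Y - b k))"
      by simp
    also have "\<dots> = (\<Sum>j=1..K1. \<Sum>k=1..K2. (\<alpha> j / (X - a j)) * (\<beta> k / (Y - b k)))"
      unfolding \<alpha> \<beta> sum_product ..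
    finally show ?thesis by simp
  qed
  have "(bipoly_eval n Q X Y * (- Y) - bipoly_eval n P X Y * X) / ((\<Prod>j=1..K1. X - a j) * (\<Prod>k=1..K2. Y - b k))
      = N * (1 / ((\<Prod>j=1..K1. X - a j) * (\<Prod>k=1..K2. Y - b k)))"
    unfolding numerator by simp
  also have "\<dots> = (\<Sum>j=1..K1. \<Sum>k=1..K2. (\<alpha> j * \<beta> k) * (N * (1 / ((X - a j) * (Y - b k)))))"
    unfolding denominator sum_distrib_left by (intro sum.cong refl) (simp add: algebra_simps)
  also have "\<dots> = (\<Sum>j=1..K1. \<Sum>k=1..K2. (\<alpha> j * \<beta> k) * (\<Sum>i\<le>n. \<Sum>l\<le>n - i.
         (- Q i l) * (X ^ i * Y ^ (l + 1) / ((X - a j) * (Y - b k)))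
       + (- P i l) * (X ^ (i + 1) * Y ^ l / ((X - a j) * (Y - b k)))))"
    unfolding N_def sum_distrib_right by (intro sum.cong refl) (simp add: algebra_simps)
  finally show ?thesis .
qed

section \<open>Functions of the form in the theorem\<close>

locale circle_poles =
  fixes n K1 K2 :: nat and a b :: "nat \<Rightarrow> real" and \<rho> :: real
  assumes rho_le_a: "j \<in> {1..K1} \<Longrightarrow> \<rho> \<le> \<bar>a j\<bar>"
    and rho_le_b: "k \<in> {1..K2} \<Longrightarrow> \<rho> \<le> \<bar>b k\<bar>"
begin

definition pole_expansion ::
  "(nat \<Rightarrow> nat \<Rightarrow> real poly) \<Rightarrow> (nat \<Rightarrow> nat \<Rightarrow> real poly) \<Rightarrow> real poly \<Rightarrow> real \<Rightarrow> real" where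
  "pole_expansion U V W r =
     (\<Sum>j=1..K1. (\<Sum>k=1..K2. poly (U j k) (r\<^sup>2) / ((a j)\<^sup>2 + (b k)\<^sup>2 - r\<^sup>2)) * (1 / sqrt ((a j)\<^sup>2 - r\<^sup>2)))
   + (\<Sum>k=1..K2. (\<Sum>j=1..K1. poly (V j k) (r\<^sup>2) / ((a j)\<^sup>2 + (b k)\<^sup>2 - r\<^sup>2)) * (1 / sqrt ((b k)\<^sup>2 - r\<^sup>2)))
   + poly W (r\<^sup>2)"

definition admissible_degrees ::
  "(nat \<Rightarrow> nat \<Rightarrow> real poly) \<Rightarrow> (nat \<Rightarrow> nat \<Rightarrow> real poly) \<Rightarrow> real poly \<Rightarrow> bool" where
  "admissible_degrees U V W \<longleftrightarrow>
     (\<forall>j\<in>{1..K1}. \<forall>k\<in>{1..K2}. degree (U j k) \<le> n div 2 + 1 \<and> degree (V j k) \<le> n div 2 + 1)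
   \<and> (if n = 0 then W = 0 else degree W \<le> (n - 1) div 2)"

definition representable :: "(real \<Rightarrow> real) \<Rightarrow> bool" where
  "representable f \<longleftrightarrow> (\<exists>U V W. admissible_degrees U V W \<and> (\<forall>r. 0 < r \<and> r < \<rho> \<longrightarrow> f r = pole_expansion U V W r))"

lemma pole_expansion_add:
  "pole_expansion U V W r + pole_expansion U' V' W' r
     = pole_expansion (\<lambda>j k. U j k + U' j k) (\<lambda>j k. V j k + V' j k) (W + W') r"
  unfolding pole_expansion_def by (simp add: sum.distrib add_divide_distrib distrib_right add_ac)

lemma pole_expansion_smult:
  "c * pole_expansion U V W r = pole_expansion (\<lambda>j k. smult c (U j k)) (\<lambda>j k. smult c (V j k)) (smult c W) r"
  unfolding pole_expansion_def by (simp add: sum_distrib_left distrib_left mult.assoc)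

lemma admissible_degrees_add:
  assumes "admissible_degrees U V W" "admissible_degrees U' V' W'"
  shows "admissible_degrees (\<lambda>j k. U j k + U' j k) (\<lambda>j k. V j k + V' j k) (W + W')"
  using assms unfolding admissible_degrees_def by (cases "n = 0") (simp_all add: degree_add_le)

lemma admissible_degrees_smult:
  assumes "admissible_degrees U V W"
  shows "admissible_degrees (\<lambda>j k. smult c (U j k)) (\<lambda>j k. smult c (V j k)) (smult c W)"
  using assms unfolding admissible_degrees_def by (cases "n = 0") (auto intro: order_trans[OF degree_smult_le])

lemma representable_cong:
  assumes "representable f" "\<And>r. 0 < r \<Longrightarrow> r < \<rho> \<Longrightarrow> g r = f r"
  shows "representable g"
  using assms unfolding representable_def by auto

lemma representable_add:
  assumes "representable f" "representable g"
  shows "representable (\<lambda>r. f r + g r)"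
proof -
  obtain U V W where UVW: "admissible_degrees U V W"
    and f: "\<And>r. 0 < r \<and> r < \<rho> \<Longrightarrow> f r = pole_expansion U V W r"
    using assms(1) unfolding representable_def by blast
  obtain U' V' W' where UVW': "admissible_degrees U' V' W'"
    and g: "\<And>r. 0 < r \<and> r < \<rho> \<Longrightarrow> g r = pole_expansion U' V' W' r"
    using assms(2) unfolding representable_def by blast
  show ?thesis
    unfolding representable_def
    using admissible_degrees_add[OF UVW UVW'] f g pole_expansion_add by auto
qed

lemma representable_cmult:
  assumes "representable f"
  shows "representable (\<lambda>r. c * f r)"
proof -
  obtain U V W where UVW: "admissible_degrees U V W"
    and f: "\<And>r. 0 < r \<and> r < \<rho> \<Longrightarrow> f r = pole_expansion U V W r"
    using assms unfolding representable_def by blast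
  show ?thesis
    unfolding representable_def
    using admissible_degrees_smult[OF UVW] f pole_expansion_smult by auto
qed

lemma representable_poly:
  assumes "W = 0 \<or> 2 * degree W < n"
  shows "representable (\<lambda>r. poly W (r\<^sup>2))"
  unfolding representable_def
proof (intro exI conjI allI impI)
  show "admissible_degrees (\<lambda>j k. 0) (\<lambda>j k. 0) W"
    using assms unfolding admissible_degrees_def by auto
qed (simp add: pole_expansion_def)

lemma representable_0: "representable (\<lambda>r. 0)"
  using representable_poly[of 0] by simp

lemma representable_a_pole:
  assumes "j0 \<in> {1..K1}" "k0 \<in> {1..K2}" "degree p \<le> n div 2 + 1"
  shows "representable (\<lambda>r. poly p (r\<^sup>2) / ((a j0)\<^sup>2 + (b k0)\<^sup>2 - r\<^sup>2) * (1 / sqrt ((a j0)\<^sup>2 - r\<^sup>2)))"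
  unfolding representable_def
proof (intro exI conjI allI impI)
  let ?U = "\<lambda>j k. if k = k0 then if j = j0 then p else 0 else 0"
  show "admissible_degrees ?U (\<lambda>j k. 0) 0"
    using assms(3) unfolding admissible_degrees_def by auto
  show "poly p (r\<^sup>2) / ((a j0)\<^sup>2 + (b k0)\<^sup>2 - r\<^sup>2) * (1 / sqrt ((a j0)\<^sup>2 - r\<^sup>2)) = pole_expansion ?U (\<lambda>j k. 0) 0 r" for r
  proof -
    have if_poly: "poly (if P then q else 0) x = (if P then poly q x else 0)" for P q x
      by simp
    have if_div: "(if P then x else 0) / y = (if P then x / y else 0)" for P and x y :: real
      by simp
    show ?thesis using assms(1,2) unfolding pole_expansion_def by (simp add: if_poly if_div sum.delta)
  qed
qed

lemma representable_b_pole: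
  assumes "j0 \<in> {1..K1}" "k0 \<in> {1..K2}" "degree p \<le> n div 2 + 1"
  shows "representable (\<lambda>r. poly p (r\<^sup>2) / ((a j0)\<^sup>2 + (b k0)\<^sup>2 - r\<^sup>2) * (1 / sqrt ((b k0)\<^sup>2 - r\<^sup>2)))"
  unfolding representable_def
proof (intro exI conjI allI impI)
  let ?V = "\<lambda>j k. if j = j0 then if k = k0 then p else 0 else 0"
  show "admissible_degrees (\<lambda>j k. 0) ?V 0"
    using assms(3) unfolding admissible_degrees_def by auto
  show "poly p (r\<^sup>2) / ((a j0)\<^sup>2 + (b k0)\<^sup>2 - r\<^sup>2) * (1 / sqrt ((b k0)\<^sup>2 - r\<^sup>2)) = pole_expansion (\<lambda>j k. 0) ?V 0 r" for r
  proof -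
    have if_poly: "poly (if P then q else 0) x = (if P then poly q x else 0)" for P q x
      by simp
    have if_div: "(if P then x else 0) / y = (if P then x / y else 0)" for P and x y :: real
      by simp
    show ?thesis using assms(1,2) unfolding pole_expansion_def by (simp add: if_poly if_div sum.delta)
  qed
qed

lemma abs_less_a:
  assumes "0 < r" "r < \<rho>" "j \<in> {1..K1}"
  shows "\<bar>r\<bar> < \<bar>a j\<bar>"
  using assms rho_le_a by fastforce

lemma abs_less_b:
  assumes "0 < r" "r < \<rho>" "k \<in> {1..K2}"
  shows "\<bar>r\<bar> < \<bar>b k\<bar>"
  using assms rho_le_b by fastforce

lemma pole_denominator_pos:
  assumes "0 < r" "r < \<rho>" "j \<in> {1..K1}" "k \<in> {1..K2}"
  shows "(a j)\<^sup>2 + (b k)\<^sup>2 - r\<^sup>2 > 0"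
  using abs_less_b[OF assms(1,2,4)] abs_le_square_iff[of "b k" r] zero_le_power2[of "a j"] by linarith

lemma representable_a_sqrt:
  assumes j: "j \<in> {1..K1}" and k: "k \<in> {1..K2}" and "2 * e \<le> n"
  shows "representable (\<lambda>r. (r\<^sup>2 - (a j)\<^sup>2) ^ e / sqrt ((a j)\<^sup>2 - r\<^sup>2))"
proof -
  let ?p = "[:- (a j)\<^sup>2, 1:] ^ e * [:(a j)\<^sup>2 + (b k)\<^sup>2, -1:]"
  have "degree ?p \<le> e + 1"
    using degree_mult_le[of "[:- (a j)\<^sup>2, 1:] ^ e" "[:(a j)\<^sup>2 + (b k)\<^sup>2, -1:]"]
      degree_power_le[of "[:- (a j)\<^sup>2, 1:]" e] by (simp add: degree_pCons_le)
  with assms(3) have "degree ?p \<le> n div 2 + 1" by linarith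
  from representable_a_pole[OF j k this] show ?thesis
  proof (rule representable_cong)
    fix r assume "0 < r" "r < \<rho>"
    have "poly ?p (r\<^sup>2) = (r\<^sup>2 - (a j)\<^sup>2) ^ e * ((a j)\<^sup>2 + (b k)\<^sup>2 - r\<^sup>2)"
      by (simp add: algebra_simps)
    with pole_denominator_pos[OF \<open>0 < r\<close> \<open>r < \<rho>\<close> j k]
    show "(r\<^sup>2 - (a j)\<^sup>2) ^ e / sqrt ((a j)\<^sup>2 - r\<^sup>2)
        = poly ?p (r\<^sup>2) / ((a j)\<^sup>2 + (b k)\<^sup>2 - r\<^sup>2) * (1 / sqrt ((a j)\<^sup>2 - r\<^sup>2))"
      by simp
  qed
qed

lemma representable_b_sqrt:
  assumes j: "j \<in> {1..K1}" and k: "k \<in> {1..K2}" and "2 * e \<le> n"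
  shows "representable (\<lambda>r. (r\<^sup>2 - (b k)\<^sup>2) ^ e / sqrt ((b k)\<^sup>2 - r\<^sup>2))"
proof -
  let ?p = "[:- (b k)\<^sup>2, 1:] ^ e * [:(a j)\<^sup>2 + (b k)\<^sup>2, -1:]"
  have "degree ?p \<le> e + 1"
    using degree_mult_le[of "[:- (b k)\<^sup>2, 1:] ^ e" "[:(a j)\<^sup>2 + (b k)\<^sup>2, -1:]"]
      degree_power_le[of "[:- (b k)\<^sup>2, 1:]" e] by (simp add: degree_pCons_le)
  with assms(3) have "degree ?p \<le> n div 2 + 1" by linarith
  from representable_b_pole[OF j k this] show ?thesis
  proof (rule representable_cong)
    fix r assume "0 < r" "r < \<rho>"
    have "poly ?p (r\<^sup>2) = (r\<^sup>2 - (b k)\<^sup>2) ^ e * ((a j)\<^sup>2 + (b k)\<^sup>2 - r\<^sup>2)"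
      by (simp add: algebra_simps)
    with pole_denominator_pos[OF \<open>0 < r\<close> \<open>r < \<rho>\<close> j k]
    show "(r\<^sup>2 - (b k)\<^sup>2) ^ e / sqrt ((b k)\<^sup>2 - r\<^sup>2)
        = poly ?p (r\<^sup>2) / ((a j)\<^sup>2 + (b k)\<^sup>2 - r\<^sup>2) * (1 / sqrt ((b k)\<^sup>2 - r\<^sup>2))"
      by simp
  qed
qed

lemma representable_integral_power_sin_over_cos:
  assumes c: "\<And>r. 0 < r \<Longrightarrow> r < \<rho> \<Longrightarrow> \<bar>r\<bar> < \<bar>c\<bar>"
    and sqrt_term: "\<And>e. 2 * e \<le> n \<Longrightarrow> representable (\<lambda>r. (r\<^sup>2 - c\<^sup>2) ^ e / sqrt (c\<^sup>2 - r\<^sup>2))"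
    and "m \<le> n"
  shows "representable (\<lambda>r. integral {0..2*pi} (\<lambda>t. (r * sin t) ^ m / (r * cos t - c)))"
proof (cases "odd m")
  case True
  show ?thesis
    by (rule representable_cong[OF representable_0]) (simp add: integral_odd_power_sin_over_cos[OF True c])
next
  case False
  then have "even m" by simp
  then obtain e where m: "m = 2 * e" ..
  obtain p where p_deg: "p = 0 \<or> degree p < e"
    and p: "\<And>r. \<bar>r\<bar> < \<bar>c\<bar> \<Longrightarrow> integral {0..2*pi} (\<lambda>t. (r * sin t) ^ (2*e) / (r * cos t - c))
             = (r\<^sup>2 - c\<^sup>2) ^ e * integral {0..2*pi} (\<lambda>t. 1 / (r * cos t - c)) + poly p (r\<^sup>2)"
    using integral_even_power_sin_over_cos[of e c] by blast
  have "representable (\<lambda>r. (- 2 * pi * sgn c) * ((r\<^sup>2 - c\<^sup>2) ^ e / sqrt (c\<^sup>2 - r\<^sup>2)) + poly p (r\<^sup>2))"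
    using sqrt_term[of e] p_deg \<open>m \<le> n\<close> m
    by (intro representable_add representable_cmult representable_poly) auto
  then show ?thesis
  proof (rule representable_cong)
    fix r assume "0 < r" "r < \<rho>"
    then have rc: "\<bar>r\<bar> < \<bar>c\<bar>" by (rule c)
    show "integral {0..2*pi} (\<lambda>t. (r * sin t) ^ m / (r * cos t - c))
        = (- 2 * pi * sgn c) * ((r\<^sup>2 - c\<^sup>2) ^ e / sqrt (c\<^sup>2 - r\<^sup>2)) + poly p (r\<^sup>2)"
      unfolding m p[OF rc] integral_inverse_cos_sub[OF rc] by simp
  qed
qed

definition integral_representable :: "(real \<Rightarrow> real \<Rightarrow> real) \<Rightarrow> bool" where
  "integral_representable g \<longleftrightarrow>
     (\<forall>r. 0 < r \<and> r < \<rho> \<longrightarrow> g r integrable_on {0..2*pi})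
   \<and> representable (\<lambda>r. integral {0..2*pi} (g r))"

lemma integral_representable_cong:
  assumes "integral_representable f" "\<And>r t. 0 < r \<Longrightarrow> r < \<rho> \<Longrightarrow> g r t = f r t"
  shows "integral_representable g"
proof -
  have "g r = f r" if "0 < r" "r < \<rho>" for r using assms(2) that by auto
  then show ?thesis using assms(1) unfolding integral_representable_def
    by (auto intro: representable_cong)
qed

lemma integral_representable_add:
  assumes "integral_representable f" "integral_representable g"
  shows "integral_representable (\<lambda>r t. f r t + g r t)"
proof -
  have "representable (\<lambda>r. integral {0..2*pi} (f r) + integral {0..2*pi} (g r))"
    using assms unfolding integral_representable_def by (intro representable_add) auto
  then have "representable (\<lambda>r. integral {0..2*pi} (\<lambda>t. f r t + g r t))"
    by (rule representable_cong) (use assms in \<open>simp add: integral_representable_def integral_add\<close>)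
  then show ?thesis
    using assms unfolding integral_representable_def by (auto intro: integrable_add)
qed

lemma integral_representable_cmult:
  assumes "integral_representable f"
  shows "integral_representable (\<lambda>r t. c * f r t)"
  using assms representable_cmult[of "\<lambda>r. integral {0..2*pi} (f r)" c]
  unfolding integral_representable_def by (auto intro: integrable_on_mult_right)

lemma integral_representable_sum:
  assumes "finite S" "\<And>i. i \<in> S \<Longrightarrow> integral_representable (F i)"
  shows "integral_representable (\<lambda>r t. \<Sum>i\<in>S. F i r t)"
  using assms
proof (induction S rule: finite_induct)
  case empty
  then show ?case using representable_0 by (simp add: integral_representable_def integrable_0)
next
  case (insert i S)
  then show ?case using integral_representable_add[of "F i" "\<lambda>r t. \<Sum>i\<in>S. F i r t"] by simp
qed

lemma integral_representable_monomial:
  assumes "m + h < n"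
  shows "integral_representable (\<lambda>r t. (r * cos t) ^ m * (r * sin t) ^ h)"
  unfolding integral_representable_def
proof (intro conjI allI impI)
  show "(\<lambda>t. (r * cos t) ^ m * (r * sin t) ^ h) integrable_on {0..2*pi}" for r
    by (intro integrable_continuous_real continuous_intros)
  show "representable (\<lambda>r. integral {0..2*pi} (\<lambda>t. (r * cos t) ^ m * (r * sin t) ^ h))"
  proof (cases "odd (m + h)")
    case True
    show ?thesis
      by (rule representable_cong[OF representable_0]) (simp add: integral_circle_monomial_odd[OF True])
  next
    case False
    then have "even (m + h)" by simp
    then obtain q where q: "m + h = 2 * q" ..
    define \<mu> where "\<mu> = integral {0..2*pi} (\<lambda>t. cos t ^ m * sin t ^ h)"
    have "monom \<mu> q = 0 \<or> 2 * degree (monom \<mu> q) < n"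
      using degree_monom_le[of \<mu> q] q assms by auto
    from representable_poly[OF this] show ?thesis
      by (rule representable_cong) (simp add: integral_circle_monomial q \<mu>_def poly_monom power_mult)
  qed
qed

lemma integral_representable_power_sin_over_cos:
  assumes j: "j \<in> {1..K1}" and k: "k \<in> {1..K2}" and "m \<le> n"
  shows "integral_representable (\<lambda>r t. (r * sin t) ^ m / (r * cos t - a j))"
  unfolding integral_representable_def
proof (intro conjI allI impI)
  show "(\<lambda>t. (r * sin t) ^ m / (r * cos t - a j)) integrable_on {0..2*pi}" if "0 < r \<and> r < \<rho>" for r
    using circle_coordinates_neq[OF abs_less_a[OF _ _ j]] that
    by (intro integrable_continuous_real continuous_intros) auto
  show "representable (\<lambda>r. integral {0..2*pi} (\<lambda>t. (r * sin t) ^ m / (r * cos t - a j)))"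
    using abs_less_a[OF _ _ j] representable_a_sqrt[OF j k] \<open>m \<le> n\<close>
    by (rule representable_integral_power_sin_over_cos)
qed

lemma integral_representable_power_cos_over_sin:
  assumes j: "j \<in> {1..K1}" and k: "k \<in> {1..K2}" and "m \<le> n"
  shows "integral_representable (\<lambda>r t. (r * cos t) ^ m / (r * sin t - b k))"
  unfolding integral_representable_def
proof (intro conjI allI impI)
  show "(\<lambda>t. (r * cos t) ^ m / (r * sin t - b k)) integrable_on {0..2*pi}" if "0 < r \<and> r < \<rho>" for r
    using circle_coordinates_neq[OF abs_less_b[OF _ _ k]] that
    by (intro integrable_continuous_real continuous_intros) auto
  have "representable (\<lambda>r. integral {0..2*pi} (\<lambda>t. (r * sin t) ^ m / (r * cos t - b k)))"
    using abs_less_b[OF _ _ k] representable_b_sqrt[OF j k] \<open>m \<le> n\<close>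
    by (rule representable_integral_power_sin_over_cos)
  then show "representable (\<lambda>r. integral {0..2*pi} (\<lambda>t. (r * cos t) ^ m / (r * sin t - b k)))"
  proof (rule representable_cong)
    fix r assume "0 < r" "r < \<rho>"
    from integral_power_cos_over_sin[OF abs_less_b[OF this k]]
    show "integral {0..2*pi} (\<lambda>t. (r * cos t) ^ m / (r * sin t - b k))
        = integral {0..2*pi} (\<lambda>t. (r * sin t) ^ m / (r * cos t - b k))" .
  qed
qed

lemma integral_representable_inverse_product:
  assumes j: "j \<in> {1..K1}" and k: "k \<in> {1..K2}"
  shows "integral_representable (\<lambda>r t. 1 / ((r * cos t - a j) * (r * sin t - b k)))"
  unfolding integral_representable_def
proof (intro conjI allI impI)
  show "(\<lambda>t. 1 / ((r * cos t - a j) * (r * sin t - b k))) integrable_on {0..2*pi}" if "0 < r \<and> r < \<rho>" for r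
    using circle_coordinates_neq[OF abs_less_a[OF _ _ j]] circle_coordinates_neq[OF abs_less_b[OF _ _ k]] that
    by (intro integrable_continuous_real continuous_intros) auto
  have "representable (\<lambda>r. poly [:2 * pi * b k * sgn (a j):] (r\<^sup>2) / ((a j)\<^sup>2 + (b k)\<^sup>2 - r\<^sup>2) * (1 / sqrt ((a j)\<^sup>2 - r\<^sup>2))
                         + poly [:2 * pi * a j * sgn (b k):] (r\<^sup>2) / ((a j)\<^sup>2 + (b k)\<^sup>2 - r\<^sup>2) * (1 / sqrt ((b k)\<^sup>2 - r\<^sup>2)))"
    by (intro representable_add representable_a_pole representable_b_pole j k) simp_all
  then show "representable (\<lambda>r. integral {0..2*pi} (\<lambda>t. 1 / ((r * cos t - a j) * (r * sin t - b k))))"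
  proof (rule representable_cong)
    fix r assume r: "0 < r" "r < \<rho>"
    note ra = abs_less_a[OF r j] and rb = abs_less_b[OF r k]
    show "integral {0..2*pi} (\<lambda>t. 1 / ((r * cos t - a j) * (r * sin t - b k)))
        = poly [:2 * pi * b k * sgn (a j):] (r\<^sup>2) / ((a j)\<^sup>2 + (b k)\<^sup>2 - r\<^sup>2) * (1 / sqrt ((a j)\<^sup>2 - r\<^sup>2))
          + poly [:2 * pi * a j * sgn (b k):] (r\<^sup>2) / ((a j)\<^sup>2 + (b k)\<^sup>2 - r\<^sup>2) * (1 / sqrt ((b k)\<^sup>2 - r\<^sup>2))"
    proof -
      have "- 1 / D * (A * (- 2 * pi * sB / SB) + B * (- 2 * pi * sA / SA))
          = poly [:2 * pi * B * sA:] x / D * (1 / SA) + poly [:2 * pi * A * sB:] x / D * (1 / SB)"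
        for D A B sA sB SA SB x :: real
        by (simp add: algebra_simps)
      then show ?thesis
        unfolding integral_inverse_product[OF ra rb] integral_inverse_cos_sub[OF ra] integral_inverse_cos_sub[OF rb] .
    qed
  qed
qed

lemma integral_representable_monomial_over_product:
  assumes j: "j \<in> {1..K1}" and k: "k \<in> {1..K2}" and "p + q \<le> n + 1"
  shows "integral_representable (\<lambda>r t. (r * cos t) ^ p * (r * sin t) ^ q / ((r * cos t - a j) * (r * sin t - b k)))"
proof -
  have "integral_representable (\<lambda>r t.
      (\<Sum>m<p. \<Sum>h<q. (a j ^ (p - Suc m) * b k ^ (q - Suc h)) * ((r * cos t) ^ m * (r * sin t) ^ h))
      + b k ^ q * (\<Sum>m<p. a j ^ (p - Suc m) * ((r * cos t) ^ m / (r * sin t - b k)))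
      + a j ^ p * (\<Sum>h<q. b k ^ (q - Suc h) * ((r * sin t) ^ h / (r * cos t - a j)))
      + (a j ^ p * b k ^ q) * (1 / ((r * cos t - a j) * (r * sin t - b k))))"
    using assms
    by (intro integral_representable_add integral_representable_sum integral_representable_cmult
        integral_representable_monomial integral_representable_power_cos_over_sin
        integral_representable_power_sin_over_cos integral_representable_inverse_product finite_lessThan) auto
  then show ?thesis
  proof (rule integral_representable_cong, goal_cases)
    case (1 r t)
    with j k show ?case
      by (intro monomial_over_product_expansion circle_coordinates_neq abs_less_a abs_less_b)
  qed
qed

lemma representable_circle_integral:
  assumes \<alpha>: "\<And>x. \<forall>j\<in>{1..K1}. x \<noteq> a j \<Longrightarrow> 1 / (\<Prod>j=1..K1. x - a j) = (\<Sum>j=1..K1. \<alpha> j / (x - a j))"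
    and \<beta>: "\<And>y. \<forall>k\<in>{1..K2}. y \<noteq> b k \<Longrightarrow> 1 / (\<Prod>k=1..K2. y - b k) = (\<Sum>k=1..K2. \<beta> k / (y - b k))"
  shows "representable (circle_integral_I n P Q K1 K2 a b)"
proof -
  have "integral_representable (\<lambda>r t. \<Sum>j=1..K1. \<Sum>k=1..K2. (\<alpha> j * \<beta> k) * (\<Sum>i\<le>n. \<Sum>l\<le>n - i.
         (- Q i l) * ((r * cos t) ^ i * (r * sin t) ^ (l + 1) / ((r * cos t - a j) * (r * sin t - b k)))
       + (- P i l) * ((r * cos t) ^ (i + 1) * (r * sin t) ^ l / ((r * cos t - a j) * (r * sin t - b k)))))"
    by (intro integral_representable_sum integral_representable_cmult integral_representable_add
        integral_representable_monomial_over_product finite_atLeastAtMost finite_atMost) auto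
  then have "integral_representable (\<lambda>r t.
      (bipoly_eval n Q (r * cos t) (r * sin t) * (- r * sin t) - bipoly_eval n P (r * cos t) (r * sin t) * (r * cos t))
      / ((\<Prod>j=1..K1. r * cos t - a j) * (\<Prod>k=1..K2. r * sin t - b k)))"
  proof (rule integral_representable_cong, goal_cases)
    case (1 r t)
    then have "\<forall>j\<in>{1..K1}. r * cos t \<noteq> a j" "\<forall>k\<in>{1..K2}. r * sin t \<noteq> b k"
      using circle_coordinates_neq abs_less_a abs_less_b by blast+
    from circle_integrand_expansion[OF \<alpha>[OF this(1)] \<beta>[OF this(2)], where n = n and P = P and Q = Q]
    show ?case by simp
  qed
  then show ?thesis
    unfolding integral_representable_def circle_integral_I_def by simp
qed

end

theorem proposition2p4:
  fixes K1 K2 n :: nat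
    and P Q :: "nat \<Rightarrow> nat \<Rightarrow> real"
    and a b :: "nat \<Rightarrow> real"
  assumes "K1 \<ge> 1" and "K2 \<ge> 1"
    and "\<forall>j\<in>{1..K1}. a j \<noteq> 0" and "\<forall>k\<in>{1..K2}. b k \<noteq> 0"
    and "inj_on a {1..K1}" and "inj_on b {1..K2}"
  defines "\<rho> \<equiv> Min ((\<lambda>j. \<bar>a j\<bar>) ` {1..K1} \<union> (\<lambda>k. \<bar>b k\<bar>) ` {1..K2})"
  shows "\<exists>(U :: nat \<Rightarrow> nat \<Rightarrow> real poly) (V :: nat \<Rightarrow> nat \<Rightarrow> real poly) (W :: real poly).
           (\<forall>j\<in>{1..K1}. \<forall>k\<in>{1..K2}. degree (U j k) \<le> n div 2 + 1 \<and> degree (V j k) \<le> n div 2 + 1)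
         \<and> (if n = 0 then W = 0 else degree W \<le> (n - 1) div 2)
         \<and> (\<forall>r. 0 < r \<and> r < \<rho> \<longrightarrow>
              circle_integral_I n P Q K1 K2 a b r =
                (\<Sum>j=1..K1. (\<Sum>k=1..K2. poly (U j k) (r\<^sup>2) / ((a j)\<^sup>2 + (b k)\<^sup>2 - r\<^sup>2))
                              * (1 / sqrt ((a j)\<^sup>2 - r\<^sup>2)))
              + (\<Sum>k=1..K2. (\<Sum>j=1..K1. poly (V j k) (r\<^sup>2) / ((a j)\<^sup>2 + (b k)\<^sup>2 - r\<^sup>2))
                              * (1 / sqrt ((b k)\<^sup>2 - r\<^sup>2)))
              + poly W (r\<^sup>2))"
proof -
  \<comment> \<open>The hypotheses a j \<noteq> 0 and b k \<noteq> 0 only make \<rho> positive.\<close>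
  interpret circle_poles n K1 K2 a b \<rho>
    by unfold_locales (auto simp: \<rho>_def intro: Min_le)
  obtain \<alpha> where "\<And>x. \<forall>j\<in>{1..K1}. x \<noteq> a j \<Longrightarrow> 1 / (\<Prod>j=1..K1. x - a j) = (\<Sum>j=1..K1. \<alpha> j / (x - a j))"
    using inverse_prod_partial_fractions[of "{1..K1}" a] assms(1,5) by auto
  moreover obtain \<beta> where "\<And>y. \<forall>k\<in>{1..K2}. y \<noteq> b k \<Longrightarrow> 1 / (\<Prod>k=1..K2. y - b k) = (\<Sum>k=1..K2. \<beta> k / (y - b k))"
    using inverse_prod_partial_fractions[of "{1..K2}" b] assms(2,6) by auto
  ultimately have "representable (circle_integral_I n P Q K1 K2 a b)"
    by (rule representable_circle_integral)
  then show ?thesis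
    unfolding representable_def admissible_degrees_def pole_expansion_def by blast
qed

end
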